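(* Let $F$ be an APN bijection of $\mathbb F_2^m$ with $F(0)=0$ and $S=STS(\mathcal H^n)$. Then every rotation line at every nonzero point of the self-embedding $S\cup F(S)$ has at least $6$ and at most $2^m-2$ points.
   Context: $n=2^m-1$; identify $\mathbb F_2^m$ with $GF(2^m)$. $F$ is APN if for all $a,b$ with $b\ne0$ the equation $F(x)+F(x+b)=a$ has at most two solutions. $S=STS(\mathcal H^n)$ is the set of 3-subsets $\{a,b,c\}$ of nonzero elements with $a+b+c=0$; $F(S)=\{\{F(a),F(b),F(c)\}:\{a,b,c\}\in S\}$. For nonzero $a$, let $P_a=\mathbb F_2^m\setminus\{0,a\}$, $s_a(y)=a+y$ and $\psi_a(y)=F(F^{-1}(a)+F^{-1}(y))$. The rotation lines at $a$ are the orbits on $P_a$ of the group generated by $s_a,\psi_a$; the number of points of a rotation line is the size of the orbit. *)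

theory Defs
  imports "HOL-Analysis.Finite_Cartesian_Product" "HOL-Library.Z2"
begin

text \<open>The ambient space F_2^m is modelled as the type bit ^ 'm, with m = CARD('m).
  Only its additive structure is used.\<close>

instance bit :: finite
proof
  have "(UNIV :: bit set) = {0, 1}"
    by (auto intro: bit_not_zero_iff[THEN iffD1])
  then show "finite (UNIV :: bit set)" by (metis finite.emptyI finite_insert)
qed

definition APN :: "('b::{finite,ab_group_add} \<Rightarrow> 'b) \<Rightarrow> bool" where
  "APN F \<longleftrightarrow> (\<forall>a b. b \<noteq> 0 \<longrightarrow> card {x. F x + F (x + b) = a} \<le> 2)"

definition P_pts :: "'b::{finite,ab_group_add} \<Rightarrow> 'b set" where
  "P_pts a = UNIV - {0, a}"

definition s_map :: "'b::{finite,ab_group_add} \<Rightarrow> 'b \<Rightarrow> 'b" where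
  "s_map a y = a + y"

definition psi_map :: "('b::{finite,ab_group_add} \<Rightarrow> 'b) \<Rightarrow> 'b \<Rightarrow> 'b \<Rightarrow> 'b" where
  "psi_map F a y = F (inv F a + inv F y)"

text \<open>One-step relation on P_a given by the two generators; the orbit of y under the
  group generated by s_a and psi_a is its class under the reflexive, symmetric,
  transitive closure of this relation.\<close>

definition gen_rel :: "('b::{finite,ab_group_add} \<Rightarrow> 'b) \<Rightarrow> 'b \<Rightarrow> ('b \<times> 'b) set" where
  "gen_rel F a = {(y, s_map a y) | y. y \<in> P_pts a} \<union> {(y, psi_map F a y) | y. y \<in> P_pts a}"

definition rotation_line :: "('b::{finite,ab_group_add} \<Rightarrow> 'b) \<Rightarrow> 'b \<Rightarrow> 'b \<Rightarrow> 'b set" where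
  "rotation_line F a y = {z. (y, z) \<in> (gen_rel F a \<union> (gen_rel F a)\<inverse>)\<^sup>*}"

end

theory Submission
  imports Defs
begin

text \<open>Both generators of the rotation group at a are fixed-point-free involutions of P_a:
  s_a trivially, and psi_a because it is s_u conjugated by F, where F u = a.
  APN-ness says that a nonzero derivative x \<mapsto> F x + F (x + d) takes each value only on
  one pair {x, x + d}. With d = u this gives psi_a y \<noteq> s_a y on P_a, and with
  d = inv F y + inv F (a + y) it shows that s_a and psi_a do not commute at y.
  These relations force the six points y, s y, psi y, s psi y, psi s y, s psi s y of the
  rotation line through y to be pairwise distinct.\<close>

class boolean_group = ab_group_add +
  assumes add_self [simp]: "x + x = 0"
begin

lemma add_self_left [simp]: "x + (x + y) = y"
  by (simp flip: add.assoc)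

lemma add_eq_iff_eq_add: "x + y = z \<longleftrightarrow> y = x + z"
  by auto

end

instance bit :: boolean_group
proof
  fix x :: bit
  show "x + x = 0"
    by (cases "x = 0") (simp_all add: one_add_one)
qed

instance vec :: (boolean_group, finite) boolean_group
  by standard (simp add: vec_eq_iff)

lemma CARD_bit: "CARD(bit) = 2"
proof -
  have "(UNIV :: bit set) = {0, 1}"
    by (auto intro: bit_not_zero_iff[THEN iffD1])
  moreover have "card {0::bit, 1} = 2" by simp
  ultimately show ?thesis by metis
qed

lemma card_orbit_of_two_involutions:
  assumes "y \<in> A" and "\<sigma> ` A \<subseteq> A" and "\<tau> ` A \<subseteq> A"
    and "\<And>z. z \<in> A \<Longrightarrow> \<sigma> (\<sigma> z) = z" and "\<And>z. z \<in> A \<Longrightarrow> \<tau> (\<tau> z) = z"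
    and "\<And>z. z \<in> A \<Longrightarrow> \<sigma> z \<noteq> z" and "\<And>z. z \<in> A \<Longrightarrow> \<tau> z \<noteq> z"
    and "\<And>z. z \<in> A \<Longrightarrow> \<sigma> z \<noteq> \<tau> z"
    and "\<tau> (\<sigma> y) \<noteq> \<sigma> (\<tau> y)"
  shows "card {y, \<sigma> y, \<tau> y, \<sigma> (\<tau> y), \<tau> (\<sigma> y), \<sigma> (\<tau> (\<sigma> y))} = 6"
proof -
  have A: "\<sigma> y \<in> A" "\<tau> y \<in> A" "\<tau> (\<sigma> y) \<in> A"
    using assms(1-3) by auto
  have "\<sigma> (\<sigma> y) = y" "\<tau> (\<tau> y) = y" "\<sigma> (\<sigma> (\<tau> y)) = \<tau> y" "\<tau> (\<tau> (\<sigma> y)) = \<sigma> y"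
    "\<sigma> (\<sigma> (\<tau> (\<sigma> y))) = \<tau> (\<sigma> y)"
    and "\<sigma> y \<noteq> y" "\<tau> y \<noteq> y" "\<sigma> y \<noteq> \<tau> y" "\<sigma> (\<tau> y) \<noteq> \<tau> y" "\<tau> (\<sigma> y) \<noteq> \<sigma> y"
    "\<sigma> (\<tau> (\<sigma> y)) \<noteq> \<tau> (\<sigma> y)"
    using assms(1,4-8) A by auto
  then show ?thesis
    using assms(9) by (simp add: card_insert_if) metis
qed

lemma APN_derivative_eq:
  fixes F :: "'b::{finite,boolean_group} \<Rightarrow> 'b"
  assumes "APN F" and "d \<noteq> 0" and "F x + F (x + d) = F y + F (y + d)"
  shows "y = x \<or> y = x + d"
proof (rule ccontr)
  assume "\<not> (y = x \<or> y = x + d)"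
  moreover have "x \<noteq> x + d"
    using \<open>d \<noteq> 0\<close> by (metis add_self_left add_0_right)
  ultimately have "3 = card {x, x + d, y}" by auto
  also have "\<dots> \<le> card {z. F z + F (z + d) = F x + F (x + d)}"
    using assms(3) by (intro card_mono) (auto simp: add.commute)
  also have "\<dots> \<le> 2"
    using assms(1,2) by (simp add: APN_def)
  finally show False by simp
qed

lemma P_pts_iff: "y \<in> P_pts a \<longleftrightarrow> y \<noteq> 0 \<and> y \<noteq> a"
  by (simp add: P_pts_def)

lemma card_P_pts:
  assumes "a \<noteq> (0::'b::{finite,ab_group_add})"
  shows "card (P_pts a) = CARD('b) - 2"
  using assms by (simp add: P_pts_def card_Diff_subset)

lemma s_map_in_P_pts:
  fixes a :: "'b::{finite,boolean_group}"
  shows "y \<in> P_pts a \<Longrightarrow> s_map a y \<in> P_pts a"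
  by (auto simp: P_pts_iff s_map_def add_eq_iff_eq_add)

lemma s_map_s_map [simp]: "s_map a (s_map a y) = (y::'b::{finite,boolean_group})"
  by (simp add: s_map_def)

lemma s_map_neq_self:
  "a \<noteq> 0 \<Longrightarrow> s_map a y \<noteq> (y::'b::{finite,boolean_group})"
  by (simp add: s_map_def add_eq_iff_eq_add)

lemma psi_map_apply:
  assumes "bij F"
  shows "psi_map F (F u) (F x) = F (u + x)"
  using assms by (simp add: psi_map_def bij_is_inj)

lemma self_mem_rotation_line: "y \<in> rotation_line F a y"
  by (simp add: rotation_line_def)

lemma rotation_line_step:
  assumes "z \<in> rotation_line F a y" and "(z, w) \<in> gen_rel F a"
  shows "w \<in> rotation_line F a y"
  using assms unfolding rotation_line_def
  by (metis (mono_tags) UnI1 mem_Collect_eq rtrancl.rtrancl_into_rtrancl)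

lemma s_map_mem_rotation_line:
  "z \<in> rotation_line F a y \<Longrightarrow> z \<in> P_pts a \<Longrightarrow> s_map a z \<in> rotation_line F a y"
  by (rule rotation_line_step) (auto simp: gen_rel_def)

lemma psi_map_mem_rotation_line:
  "z \<in> rotation_line F a y \<Longrightarrow> z \<in> P_pts a \<Longrightarrow> psi_map F a z \<in> rotation_line F a y"
  by (rule rotation_line_step) (auto simp: gen_rel_def)

context
  fixes F :: "'b::{finite,boolean_group} \<Rightarrow> 'b"
  assumes bij: "bij F" and F_0: "F 0 = 0"
begin

lemma F_eq_0_iff [simp]: "F x = 0 \<longleftrightarrow> x = 0"
  using bij F_0 by (metis bij_is_inj injD)

lemma preimageE:
  obtains x where "y = F x"
  using bij by (metis bij_is_surj surj_f_inv_f)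

lemma psi_map_psi_map [simp]: "psi_map F a (psi_map F a y) = y"
proof -
  obtain u x where "a = F u" "y = F x"
    using preimageE by metis
  then show ?thesis
    using bij by (simp add: psi_map_apply)
qed

lemma psi_map_neq_self:
  assumes "a \<noteq> 0"
  shows "psi_map F a y \<noteq> y"
proof -
  obtain u x where "a = F u" "y = F x"
    using preimageE by metis
  moreover have "u \<noteq> 0" using assms \<open>a = F u\<close> by simp
  ultimately show ?thesis
    using bij by (simp add: psi_map_apply bij_is_inj inj_eq add_eq_iff_eq_add)
qed

lemma psi_map_in_P_pts:
  assumes "y \<in> P_pts a"
  shows "psi_map F a y \<in> P_pts a"
proof -
  obtain u x where ux: "a = F u" "y = F x"
    using preimageE by metis
  then have "x \<noteq> 0" "x \<noteq> u"
    using assms by (auto simp: P_pts_iff)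
  then show ?thesis
    using bij ux by (auto simp: P_pts_iff psi_map_apply bij_is_inj inj_eq add_eq_iff_eq_add)
qed

lemma rotation_line_subset_P_pts:
  assumes "y \<in> P_pts a"
  shows "rotation_line F a y \<subseteq> P_pts a"
proof
  fix z
  assume "z \<in> rotation_line F a y"
  then have "(y, z) \<in> (gen_rel F a \<union> (gen_rel F a)\<inverse>)\<^sup>*"
    by (simp add: rotation_line_def)
  then show "z \<in> P_pts a"
    by induction (auto simp: assms gen_rel_def s_map_in_P_pts psi_map_in_P_pts)
qed

lemma card_rotation_line_le:
  assumes "a \<noteq> 0" and "y \<in> P_pts a"
  shows "card (rotation_line F a y) \<le> CARD('b) - 2"
  using card_mono[OF finite rotation_line_subset_P_pts[OF assms(2)]] card_P_pts[OF assms(1)]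
  by simp

context
  assumes APN: "APN F"
begin

lemma psi_map_neq_s_map:
  assumes "a \<noteq> 0" and "y \<in> P_pts a"
  shows "psi_map F a y \<noteq> s_map a y"
proof
  obtain u x where ux: "a = F u" "y = F x"
    using preimageE by metis
  have "u \<noteq> 0"
    using assms(1) ux by simp
  assume "psi_map F a y = s_map a y"
  then have "F (u + x) = F u + F x"
    using bij ux by (simp add: psi_map_apply s_map_def)
  then have "F 0 + F (0 + u) = F x + F (x + u)"
    by (simp add: F_0 add.commute)
  then have "x = 0 \<or> x = 0 + u"
    by (rule APN_derivative_eq[OF APN \<open>u \<noteq> 0\<close>])
  then show False
    using assms(2) ux by (auto simp: P_pts_iff)
qed

lemma psi_map_s_map_neq:
  assumes "a \<noteq> 0" and "y \<in> P_pts a"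
  shows "psi_map F a (s_map a y) \<noteq> s_map a (psi_map F a y)"
proof
  obtain u x w where uxw: "a = F u" "y = F x" "s_map a y = F w"
    using preimageE by metis
  have "u \<noteq> 0"
    using assms(1) uxw by simp
  have "F w = F x + F u"
    using uxw by (simp add: s_map_def add.commute)
  then have Fw: "F x + F w = F u"
    by simp
  have "x + w \<noteq> 0"
  proof
    assume "x + w = 0"
    then have "w = x"
      by (metis add_self_left add_0_right)
    with Fw \<open>u \<noteq> 0\<close> show False
      by simp
  qed
  assume "psi_map F a (s_map a y) = s_map a (psi_map F a y)"
  then have "F (u + w) = F (u + x) + F u"
    using bij uxw by (simp add: psi_map_apply s_map_def add.commute)
  then have "F (u + x) + F (u + w) = F u"
    by simp
  with Fw have "F x + F (x + (x + w)) = F (u + x) + F (u + x + (x + w))"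
    by (simp add: add.assoc)
  then have "u + x = x \<or> u + x = x + (x + w)"
    by (rule APN_derivative_eq[OF APN \<open>x + w \<noteq> 0\<close>])
  moreover have "u + x \<noteq> x"
    using \<open>u \<noteq> 0\<close> by simp
  moreover have "F (u + x) \<noteq> F w"
    using psi_map_neq_s_map[OF assms] bij uxw by (simp add: psi_map_apply)
  ultimately show False
    by (metis add_self_left)
qed

lemma card_rotation_line_ge_6:
  assumes "a \<noteq> 0" and "y \<in> P_pts a"
  shows "6 \<le> card (rotation_line F a y)"
proof -
  let ?s = "s_map a" and ?\<psi> = "psi_map F a"
  have "card {y, ?s y, ?\<psi> y, ?s (?\<psi> y), ?\<psi> (?s y), ?s (?\<psi> (?s y))} = 6"
  proof (rule card_orbit_of_two_involutions[where A = "P_pts a"])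
    show "?s ` P_pts a \<subseteq> P_pts a" "?\<psi> ` P_pts a \<subseteq> P_pts a"
      using s_map_in_P_pts psi_map_in_P_pts by blast+
    show "\<And>z. ?s z \<noteq> z" "\<And>z. ?\<psi> z \<noteq> z"
      using assms(1) s_map_neq_self psi_map_neq_self by blast+
    show "\<And>z. z \<in> P_pts a \<Longrightarrow> ?s z \<noteq> ?\<psi> z"
      using assms(1) psi_map_neq_s_map by (metis (no_types))
    show "?\<psi> (?s y) \<noteq> ?s (?\<psi> y)"
      using assms by (rule psi_map_s_map_neq)
  qed (simp_all add: assms(2))
  moreover have "{y, ?s y, ?\<psi> y, ?s (?\<psi> y), ?\<psi> (?s y), ?s (?\<psi> (?s y))}
      \<subseteq> rotation_line F a y"
  proof -
    have "?s z \<in> rotation_line F a y \<and> ?\<psi> z \<in> rotation_line F a y"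
      if "z \<in> rotation_line F a y" for z
      using that rotation_line_subset_P_pts[OF assms(2)]
        s_map_mem_rotation_line psi_map_mem_rotation_line by blast
    then show ?thesis
      by (simp add: self_mem_rotation_line)
  qed
  ultimately show ?thesis
    using card_mono[OF finite] by metis
qed

end

end

theorem mainTheorem15:
  fixes F :: "bit ^ 'm \<Rightarrow> bit ^ 'm"
  assumes "bij F" and "APN F" and "F 0 = 0"
  shows "\<forall>a y. a \<noteq> 0 \<and> y \<in> P_pts a \<longrightarrow>
           6 \<le> card (rotation_line F a y) \<and> card (rotation_line F a y) \<le> 2 ^ CARD('m) - 2"
proof (intro allI impI, elim conjE)
  fix a y :: "bit ^ 'm"
  assume "a \<noteq> 0" and "y \<in> P_pts a"
  then show "6 \<le> card (rotation_line F a y) \<and> card (rotation_line F a y) \<le> 2 ^ CARD('m) - 2"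
    using card_rotation_line_ge_6[OF assms(1,3,2)] card_rotation_line_le[OF assms(1,3)]
    by (simp add: CARD_bit)
qed

end
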